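(* Let $0<\varepsilon\le1$ and let $\mathfrak{L}_1$ be the linear span of $\{x e^{-\alpha x^2/(2\sqrt\varepsilon)} : \alpha\in(0,1)\}$. Then $\mathfrak{L}_1\subset D(S^{*}_\varepsilon)$, every point of $i(0,\infty)$ is an eigenvalue of $t^*$, and every point of $-i(0,\infty)$ is an eigenvalue of $S^*_\varepsilon$. In particular, $t^*$ and $S^*_\varepsilon$ are unbounded.
   Context: Work in $L^2(\mathbb{R})$ with inner product $(f,g)=\int\overline{f}g\,dx$. Let $q$ be multiplication by $x$ (self-adjoint, injective) and $p=-i\,d/dx$ (self-adjoint). Define $t=q^{-1}p$ with $D(t)=\{f\in D(p): pf\in D(q^{-1})\}$; $t$ is densely defined and $t^*$ denotes its Hilbert-space adjoint. Let $L^2_1$ denote the subspace of odd functions in $L^2(\mathbb{R})$. For $0<\varepsilon\le1$, the operator denoted $S^*_\varepsilon$ (this is notation only; it is not defined as the adjoint of another operator) is the operator in $L^2_1$ given by $D(S^*_\varepsilon)=\{f\in L^2_1\cap\bigcap_{n\ge0}D((t^* )^{2n+1}) : \lim_{N\to\infty}\sum_{n=0}^N\frac{(-1)^n}{2n+1}(\sqrt\varepsilon\,t^* )^{2n+1}f\text{ exists in norm}\}$, $S^*_\varepsilon f=-\frac{1}{\sqrt\varepsilon}\sum_{n=0}^\infty\frac{(-1)^n}{2n+1}(\sqrt\varepsilon\,t^* )^{2n+1}f$. *)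

theory Defs
  imports "HOL-Analysis.Analysis"
begin

type_synonym cfun = "real \<Rightarrow> complex"
type_synonym cop = "(cfun \<times> cfun) set"  \<comment> \<open>(possibly unbounded) operators in L2(R), given by their graphs\<close>

definition L2 :: "cfun set" where
  "L2 = {f. f \<in> borel_measurable lborel \<and> integrable lborel (\<lambda>x. (cmod (f x))\<^sup>2)}"

definition l2norm :: "cfun \<Rightarrow> real" where
  "l2norm f = sqrt (LINT x|lborel. (cmod (f x))\<^sup>2)"

definition l2inner :: "cfun \<Rightarrow> cfun \<Rightarrow> complex" where
  "l2inner f g = (LINT x|lborel. cnj (f x) * g x)"

definition odd_fun :: "cfun \<Rightarrow> bool" where
  "odd_fun f \<longleftrightarrow> (AE x in lborel. f (- x) = - f x)"

definition q_op :: cop where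
  "q_op = {(f, g). f \<in> L2 \<and> g \<in> L2 \<and> (AE x in lborel. g x = complex_of_real x * f x)}"

text \<open>Momentum operator p = -i d/dx (self-adjoint, domain H^1(R): L2 functions that are
  a.e. equal to an absolutely continuous function with L2 derivative).  (f, g) in p means
  f' = i g, i.e. g = -i f'.\<close>
definition p_op :: cop where
  "p_op = {(f, g). f \<in> L2 \<and> g \<in> L2 \<and>
     (\<exists>c. AE x in lborel. f x = c + interval_lebesgue_integral lborel (ereal 0) (ereal x) (\<lambda>s. \<i> * g s))}"

definition adjoint_op :: "cop \<Rightarrow> cop" where
  "adjoint_op T = {(g, h). g \<in> L2 \<and> h \<in> L2 \<and> (\<forall>(f, k) \<in> T. l2inner k g = l2inner f h)}"

text \<open>t = q^{-1} p with D(t) = {f in D(p). pf in D(q^{-1})}.\<close>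
definition t_op :: cop where
  "t_op = p_op O converse q_op"

text \<open>The operator S*_eps in the odd subspace L2_1 (notation only, not an adjoint).\<close>
definition S_eps :: "real \<Rightarrow> cop" where
  "S_eps \<epsilon> = {(f, g). f \<in> L2 \<and> odd_fun f \<and> g \<in> L2 \<and>
     (\<exists>v :: nat \<Rightarrow> cfun. (\<forall>n. (f, v n) \<in> (adjoint_op t_op) ^^ (2 * n + 1)) \<and>
        (\<lambda>N. l2norm (\<lambda>x. (\<Sum>n\<le>N. complex_of_real ((-1) ^ n / real (2 * n + 1) * sqrt \<epsilon> ^ (2 * n + 1)) * v n x)
                          + complex_of_real (sqrt \<epsilon>) * g x)) \<longlonglongrightarrow> 0)}"

definition eigenvalue_op :: "cop \<Rightarrow> complex \<Rightarrow> bool" where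
  "eigenvalue_op T z \<longleftrightarrow> (\<exists>f. f \<in> L2 \<and> l2norm f \<noteq> 0 \<and> (f, (\<lambda>x. z * f x)) \<in> T)"

definition unbounded_op :: "cop \<Rightarrow> bool" where
  "unbounded_op T \<longleftrightarrow> \<not> (\<exists>C. \<forall>(f, g) \<in> T. l2norm g \<le> C * l2norm f)"

definition Lfrak1 :: "real \<Rightarrow> cfun set" where
  "Lfrak1 \<epsilon> = {f. \<exists>(k::nat) (c :: nat \<Rightarrow> complex) (a :: nat \<Rightarrow> real).
      (\<forall>i<k. 0 < a i \<and> a i < 1) \<and>
      f = (\<lambda>x. \<Sum>i<k. c i * complex_of_real (x * exp (- a i * x\<^sup>2 / (2 * sqrt \<epsilon>))))}"

end

theory Submission
  imports Defs "HOL-Probability.Distributions" "HOL-Real_Asymp.Real_Asymp"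
begin

(* For \<beta> > 0 let g(x) = x exp(-\<beta> x^2/2) and e(x) = exp(-\<beta> x^2/2). If (f, k) \<in> t, then
   k = pf/x, so (k, g) = (pf, e); writing f as a constant plus the primitive of i pf and exchanging
   the order of integration turns (f, i\<beta> g) into the same integral (pf, e). Hence g is an
   eigenvector of t* with eigenvalue i\<beta>, and odd powers of t* act on it as powers of i\<beta>.
   For \<beta> = \<alpha>/\<surd>\<epsilon> with 0 < \<alpha> < 1 the series defining S*\<^sub>\<epsilon> becomes the scalar
   series -(1/\<surd>\<epsilon>) \<Sum> (-1)^n (i\<alpha>)^(2n+1)/(2n+1) = -i artanh(\<alpha>)/\<surd>\<epsilon>, which converges
   since \<bar>\<alpha>\<bar> < 1; as artanh maps (0,1) onto (0,\<infinity>), every point of -i(0,\<infinity>) is an eigenvalue.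
   Eigenvalues of unbounded modulus rule out a bound \<parallel>Tf\<parallel> \<le> C\<parallel>f\<parallel>. *)

section \<open>Square-integrable functions\<close>

lemma borel_measurable_cnj [measurable]: "cnj \<in> borel_measurable borel"
  by (intro borel_measurable_continuous_onI continuous_intros)

lemma L2_borel_measurable: "f \<in> L2 \<Longrightarrow> f \<in> borel_measurable lborel"
  by (simp add: L2_def)

lemma norm_add_sq_le:
  fixes a b :: "'a :: real_normed_vector"
  shows "(norm (a + b))\<^sup>2 \<le> 2 * (norm a)\<^sup>2 + 2 * (norm b)\<^sup>2"
proof -
  have "(norm (a + b))\<^sup>2 \<le> (norm a + norm b)\<^sup>2"
    by (simp add: norm_triangle_ineq power_mono)
  moreover have "0 \<le> (norm a - norm b)\<^sup>2"
    by simp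
  ultimately show ?thesis
    unfolding power2_diff power2_sum by linarith
qed

lemma integrable_cnj_mult_L2:
  assumes "f \<in> L2" "g \<in> L2"
  shows "integrable lborel (\<lambda>x. cnj (f x) * g x)"
proof (rule Bochner_Integration.integrable_bound)
  show "integrable lborel (\<lambda>x. (cmod (f x))\<^sup>2 + (cmod (g x))\<^sup>2)"
    using assms by (auto simp: L2_def)
  have [measurable]: "f \<in> borel_measurable lborel" "g \<in> borel_measurable lborel"
    using assms by (auto simp: L2_def)
  show "(\<lambda>x. cnj (f x) * g x) \<in> borel_measurable lborel"
    by measurable
  have "cmod (f x) * cmod (g x) \<le> (cmod (f x))\<^sup>2 + (cmod (g x))\<^sup>2" for x
  proof -
    have "0 \<le> (cmod (f x) - cmod (g x))\<^sup>2" "0 \<le> cmod (f x) * cmod (g x)"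
      by simp_all
    then show ?thesis
      unfolding power2_diff by linarith
  qed
  then show "AE x in lborel. norm (cnj (f x) * g x) \<le> norm ((cmod (f x))\<^sup>2 + (cmod (g x))\<^sup>2)"
    by (simp add: norm_mult)
qed

lemma L2_zero: "(\<lambda>x. 0) \<in> L2"
  by (simp add: L2_def)

lemma L2_cmult:
  assumes "f \<in> L2"
  shows "(\<lambda>x. z * f x) \<in> L2"
proof -
  have [measurable]: "f \<in> borel_measurable lborel"
    using assms by (rule L2_borel_measurable)
  show ?thesis
    using assms by (simp add: L2_def norm_mult power_mult_distrib)
qed

lemma L2_add:
  assumes "f \<in> L2" "g \<in> L2"
  shows "(\<lambda>x. f x + g x) \<in> L2"
proof -
  have [measurable]: "f \<in> borel_measurable lborel" "g \<in> borel_measurable lborel"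
    using assms by (auto simp: L2_def)
  have "integrable lborel (\<lambda>x. (cmod (f x + g x))\<^sup>2)"
  proof (rule Bochner_Integration.integrable_bound)
    show "integrable lborel (\<lambda>x. 2 * (cmod (f x))\<^sup>2 + 2 * (cmod (g x))\<^sup>2)"
      using assms by (simp add: L2_def)
    show "AE x in lborel. norm ((cmod (f x + g x))\<^sup>2) \<le> norm (2 * (cmod (f x))\<^sup>2 + 2 * (cmod (g x))\<^sup>2)"
      using norm_add_sq_le by (intro AE_I2) (simp add: abs_le_iff)
  qed simp
  then show ?thesis
    by (simp add: L2_def)
qed

lemma L2_sum:
  assumes "finite I" "\<And>i. i \<in> I \<Longrightarrow> f i \<in> L2"
  shows "(\<lambda>x. \<Sum>i\<in>I. c i * f i x) \<in> L2"
  using assms by (induction I rule: finite_induct) (auto intro!: L2_zero L2_add L2_cmult)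

lemma l2norm_nonneg: "0 \<le> l2norm f"
  by (simp add: l2norm_def integral_nonneg_AE)

lemma l2norm_cmult: "l2norm (\<lambda>x. z * f x) = cmod z * l2norm f"
  by (simp add: l2norm_def norm_mult power_mult_distrib real_sqrt_mult)

lemma l2inner_lincomb:
  assumes "k \<in> L2" "g1 \<in> L2" "g2 \<in> L2"
  shows "l2inner k (\<lambda>x. a * g1 x + b * g2 x) = a * l2inner k g1 + b * l2inner k g2"
proof -
  have "l2inner k (\<lambda>x. a * g1 x + b * g2 x) = (LINT x|lborel. a * (cnj (k x) * g1 x) + b * (cnj (k x) * g2 x))"
    unfolding l2inner_def by (simp add: algebra_simps)
  then show ?thesis
    using integrable_cnj_mult_L2[OF assms(1,2)] integrable_cnj_mult_L2[OF assms(1,3)]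
    by (simp add: l2inner_def)
qed

lemma cmod_sum_mult_sq_le:
  "(cmod (\<Sum>i\<in>I. d i * f i))\<^sup>2 \<le> (\<Sum>i\<in>I. (cmod (d i))\<^sup>2) * (\<Sum>i\<in>I. (cmod (f i))\<^sup>2)"
proof -
  have "(cmod (\<Sum>i\<in>I. d i * f i))\<^sup>2 \<le> (\<Sum>i\<in>I. cmod (d i) * cmod (f i))\<^sup>2"
    by (intro power_mono) (auto simp: norm_mult intro: order.trans[OF norm_sum])
  also have "\<dots> \<le> (\<Sum>i\<in>I. (cmod (d i))\<^sup>2) * (\<Sum>i\<in>I. (cmod (f i))\<^sup>2)"
    by (rule Cauchy_Schwarz_ineq_sum)
  finally show ?thesis .
qed

lemma l2norm_sum_tendsto_0:
  fixes d :: "'i \<Rightarrow> nat \<Rightarrow> complex"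
  assumes I: "finite I" and f: "\<And>i. i \<in> I \<Longrightarrow> f i \<in> L2"
    and d: "\<And>i. i \<in> I \<Longrightarrow> d i \<longlonglongrightarrow> 0"
  shows "(\<lambda>N. l2norm (\<lambda>x. \<Sum>i\<in>I. d i N * f i x)) \<longlonglongrightarrow> 0"
proof -
  define D where "D N = (\<Sum>i\<in>I. (cmod (d i N))\<^sup>2)" for N
  define C where "C = (LINT x|lborel. (\<Sum>i\<in>I. (cmod (f i x))\<^sup>2))"
  define Q where "Q N = (LINT x|lborel. (cmod (\<Sum>i\<in>I. d i N * f i x))\<^sup>2)" for N
  have bound: "Q N \<le> D N * C" for N
  proof -
    have "integrable lborel (\<lambda>x. (cmod (\<Sum>i\<in>I. d i N * f i x))\<^sup>2)"
      using L2_sum[OF I f, where c = "\<lambda>i. d i N"] by (simp add: L2_def)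
    moreover have "integrable lborel (\<lambda>x. \<Sum>i\<in>I. (cmod (f i x))\<^sup>2)"
      using f by (auto simp: L2_def)
    ultimately have "Q N \<le> (LINT x|lborel. D N * (\<Sum>i\<in>I. (cmod (f i x))\<^sup>2))"
      unfolding Q_def D_def by (intro integral_mono cmod_sum_mult_sq_le) auto
    then show ?thesis
      by (simp add: C_def)
  qed
  have "(\<lambda>N. (cmod (d i N))\<^sup>2) \<longlonglongrightarrow> 0" if "i \<in> I" for i
    using tendsto_power[OF tendsto_norm_zero[OF d[OF that]], of 2] by (simp only: power_zero_numeral)
  then have "D \<longlonglongrightarrow> 0"
    unfolding D_def by (rule tendsto_null_sum)
  then have upper_lim: "(\<lambda>N. D N * C) \<longlonglongrightarrow> 0"
    using tendsto_mult_right[of D 0 sequentially C] by simp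
  have lower: "\<forall>\<^sub>F N in sequentially. 0 \<le> Q N"
    unfolding Q_def by (intro always_eventually allI integral_nonneg_AE AE_I2) simp
  have upper: "\<forall>\<^sub>F N in sequentially. Q N \<le> D N * C"
    using bound by (intro always_eventually allI)
  have "Q \<longlonglongrightarrow> 0"
    by (rule tendsto_sandwich[OF lower upper tendsto_const upper_lim])
  then have "(\<lambda>N. sqrt (Q N)) \<longlonglongrightarrow> sqrt 0"
    by (rule tendsto_real_sqrt)
  then show ?thesis
    by (simp add: l2norm_def Q_def)
qed

section \<open>Linear combinations in the graph of an adjoint\<close>

lemma t_op_subset_L2: "t_op \<subseteq> L2 \<times> L2"
  by (auto simp: t_op_def p_op_def q_op_def)

lemma adjoint_op_zero: "(\<lambda>x. 0, \<lambda>x. 0) \<in> adjoint_op T"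
  by (simp add: adjoint_op_def l2inner_def L2_zero)

lemma adjoint_op_lincomb:
  assumes T: "T \<subseteq> L2 \<times> L2" and "(g1, h1) \<in> adjoint_op T" "(g2, h2) \<in> adjoint_op T"
  shows "(\<lambda>x. a * g1 x + b * g2 x, \<lambda>x. a * h1 x + b * h2 x) \<in> adjoint_op T"
proof -
  have L: "g1 \<in> L2" "h1 \<in> L2" "g2 \<in> L2" "h2 \<in> L2"
    using assms by (auto simp: adjoint_op_def)
  have "l2inner k (\<lambda>x. a * g1 x + b * g2 x) = l2inner f (\<lambda>x. a * h1 x + b * h2 x)"
    if "(f, k) \<in> T" for f k
  proof -
    have "f \<in> L2" "k \<in> L2"
      using T that by auto
    moreover have "l2inner k g1 = l2inner f h1" "l2inner k g2 = l2inner f h2"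
      using assms(2,3) that by (auto simp: adjoint_op_def)
    ultimately show ?thesis
      using L by (simp add: l2inner_lincomb)
  qed
  then show ?thesis
    using L by (auto simp: adjoint_op_def intro!: L2_add L2_cmult)
qed

lemma adjoint_op_sum:
  assumes "T \<subseteq> L2 \<times> L2" "finite I" "\<And>i. i \<in> I \<Longrightarrow> (g i, h i) \<in> adjoint_op T"
  shows "(\<lambda>x. \<Sum>i\<in>I. c i * g i x, \<lambda>x. \<Sum>i\<in>I. c i * h i x) \<in> adjoint_op T"
  using assms(2,3)
proof (induction I rule: finite_induct)
  case (insert j I)
  then show ?case
    using adjoint_op_lincomb[OF assms(1), of "g j" "h j" _ _ "c j" 1] by simp
qed (simp add: adjoint_op_zero)

lemma adjoint_op_relpow_eigen_sum:
  assumes "T \<subseteq> L2 \<times> L2" "finite I" "\<And>i. i \<in> I \<Longrightarrow> (g i, \<lambda>x. lam i * g i x) \<in> adjoint_op T"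
  shows "(\<lambda>x. \<Sum>i\<in>I. c i * g i x, \<lambda>x. \<Sum>i\<in>I. c i * lam i ^ n * g i x) \<in> adjoint_op T ^^ n"
proof (induction n)
  case (Suc n)
  have "(\<lambda>x. \<Sum>i\<in>I. (c i * lam i ^ n) * g i x, \<lambda>x. \<Sum>i\<in>I. (c i * lam i ^ n) * (lam i * g i x))
      \<in> adjoint_op T"
    using assms by (rule adjoint_op_sum)
  then show ?case
    using Suc by (auto simp: mult_ac)
qed simp

section \<open>Gaussian integrals\<close>

lemma integrable_power_mult_exp_neg_sq:
  fixes b :: real
  assumes "0 < b"
  shows "integrable lborel (\<lambda>x. x ^ k * exp (- b * x\<^sup>2))"
proof -
  define c where "c = sqrt (2 * b)"
  have c: "0 < c" "c\<^sup>2 = 2 * b"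
    using assms by (auto simp: c_def)
  have "integrable lborel (\<lambda>x. std_normal_density (0 + c * x) * (0 + c * x) ^ k)"
    using lborel_integrable_real_affine_iff[of c "\<lambda>x. std_normal_density x * x ^ k" 0] c
      integrable_std_normal_moment by simp
  then have "integrable lborel (\<lambda>x. sqrt (2 * pi) / c ^ k * (std_normal_density (c * x) * (c * x) ^ k))"
    by simp
  moreover have "sqrt (2 * pi) / c ^ k * (std_normal_density (c * x) * (c * x) ^ k) = x ^ k * exp (- b * x\<^sup>2)"
    for x
  proof -
    have "(c * x)\<^sup>2 / 2 = b * x\<^sup>2"
      using c by (simp add: power_mult_distrib)
    then show ?thesis
      using c by (simp add: std_normal_density_def power_mult_distrib field_simps)
  qed
  ultimately show ?thesis
    by simp
qed

definition gauss :: "real \<Rightarrow> cfun" where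
  "gauss \<beta> x = complex_of_real (exp (- \<beta> * x\<^sup>2 / 2))"

lemma borel_measurable_gauss [measurable]: "gauss \<beta> \<in> borel_measurable borel"
  unfolding gauss_def by measurable

lemma gauss_L2:
  assumes "0 < \<beta>"
  shows "gauss \<beta> \<in> L2"
proof -
  have "(cmod (gauss \<beta> x))\<^sup>2 = x ^ 0 * exp (- \<beta> * x\<^sup>2)" for x
    by (simp add: gauss_def flip: exp_double)
  then show ?thesis
    using integrable_power_mult_exp_neg_sq[OF assms, of 0] by (simp add: L2_def)
qed

definition odd_gauss :: "real \<Rightarrow> cfun" where
  "odd_gauss \<beta> x = complex_of_real (x * exp (- \<beta> * x\<^sup>2 / 2))"

lemma odd_gauss_minus: "odd_gauss \<beta> (- x) = - odd_gauss \<beta> x"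
  by (simp add: odd_gauss_def)

lemma borel_measurable_odd_gauss [measurable]: "odd_gauss \<beta> \<in> borel_measurable borel"
  unfolding odd_gauss_def by measurable

lemma odd_gauss_L2:
  assumes "0 < \<beta>"
  shows "odd_gauss \<beta> \<in> L2"
proof -
  have "(cmod (odd_gauss \<beta> x))\<^sup>2 = x ^ 2 * exp (- \<beta> * x\<^sup>2)" for x
    by (simp add: odd_gauss_def norm_mult power_mult_distrib flip: exp_double)
  then show ?thesis
    using integrable_power_mult_exp_neg_sq[OF assms, of 2] by (simp add: L2_def)
qed

lemma integrable_odd_gauss:
  assumes "0 < \<beta>"
  shows "integrable lborel (odd_gauss \<beta>)"
proof -
  have "integrable lborel (\<lambda>x. x ^ 1 * exp (- (\<beta> / 2) * x\<^sup>2))"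
    using assms by (intro integrable_power_mult_exp_neg_sq) auto
  then show ?thesis
    unfolding odd_gauss_def by (intro integrable_of_real) simp
qed

lemma integral_odd_gauss: "(LINT x|lborel. odd_gauss \<beta> x) = 0"
  using lborel_integral_real_affine[of "-1" "odd_gauss \<beta>" 0] by (simp add: odd_gauss_minus)

lemma l2norm_odd_gauss_pos:
  assumes "0 < \<beta>"
  shows "0 < l2norm (odd_gauss \<beta>)"
proof -
  have int: "integrable lborel (\<lambda>x. (cmod (odd_gauss \<beta> x))\<^sup>2)"
    using odd_gauss_L2[OF assms] by (simp add: L2_def)
  have "(LINT x|lborel. (cmod (odd_gauss \<beta> x))\<^sup>2) \<noteq> 0"
  proof
    assume "(LINT x|lborel. (cmod (odd_gauss \<beta> x))\<^sup>2) = 0"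
    then have "AE x in lborel. odd_gauss \<beta> x = 0"
      using integral_nonneg_eq_0_iff_AE[OF int] by simp
    then have "AE x in lborel. x \<notin> (UNIV :: real set)"
      using AE_lborel_singleton[of 0] by eventually_elim (simp add: odd_gauss_def)
    then show False
      using AE_iff_null_sets[of "UNIV :: real set" lborel] by (simp add: null_sets_def)
  qed
  moreover have "0 \<le> (LINT x|lborel. (cmod (odd_gauss \<beta> x))\<^sup>2)"
    by (simp add: integral_nonneg_AE)
  ultimately have "0 < (LINT x|lborel. (cmod (odd_gauss \<beta> x))\<^sup>2)"
    by linarith
  then show ?thesis
    by (simp add: l2norm_def)
qed

lemma odd_gauss_tail_integral:
  fixes \<beta> s :: real
  assumes "0 < \<beta>" "0 \<le> s"
  shows "set_integrable lborel {s<..} (\<lambda>x. x * exp (- \<beta> * x\<^sup>2 / 2))"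
    and "(LINT x:{s<..}|lborel. x * exp (- \<beta> * x\<^sup>2 / 2)) = exp (- \<beta> * s\<^sup>2 / 2) / \<beta>"
proof -
  let ?F = "\<lambda>x::real. - exp (- \<beta> * x\<^sup>2 / 2) / \<beta>"
  have "(?F has_real_derivative x * exp (- \<beta> * x\<^sup>2 / 2)) (at x)" for x
    using assms by (auto intro!: derivative_eq_intros simp: field_simps)
  moreover have "((?F \<circ> real_of_ereal) \<longlongrightarrow> ?F s) (at_right (ereal s))"
    unfolding ereal_tendsto_simps1 using assms by (intro tendsto_intros) auto
  moreover have "((?F \<circ> real_of_ereal) \<longlongrightarrow> 0) (at_left \<infinity>)"
    unfolding ereal_tendsto_simps1 using assms by real_asymp
  ultimately have "set_integrable lborel (einterval s \<infinity>) (\<lambda>x. x * exp (- \<beta> * x\<^sup>2 / 2))"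
    "(LBINT x=ereal s..\<infinity>. x * exp (- \<beta> * x\<^sup>2 / 2)) = 0 - ?F s"
    using interval_integral_FTC_nonneg[of "ereal s" \<infinity> ?F] assms(2)
    by (auto intro!: continuous_intros)
  moreover have "einterval (ereal s) \<infinity> = {s<..}"
    by (auto simp: einterval_def)
  ultimately show "set_integrable lborel {s<..} (\<lambda>x. x * exp (- \<beta> * x\<^sup>2 / 2))"
    "(LINT x:{s<..}|lborel. x * exp (- \<beta> * x\<^sup>2 / 2)) = exp (- \<beta> * s\<^sup>2 / 2) / \<beta>"
    by (simp_all add: interval_lebesgue_integral_def)
qed

definition interval_kernel :: "real \<Rightarrow> real \<Rightarrow> real" where
  "interval_kernel x s = (if 0 < s \<and> s < x then 1 else if x < s \<and> s < 0 then -1 else 0)"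

lemma interval_kernel_uminus: "interval_kernel (- x) (- s) = - interval_kernel x s"
  by (auto simp: interval_kernel_def)

lemma interval_kernel_moment:
  fixes \<beta> s :: real
  assumes "0 < \<beta>" "s \<noteq> 0"
  shows "integrable lborel (\<lambda>x. x * exp (- \<beta> * x\<^sup>2 / 2) * interval_kernel x s)"
    and "(LINT x|lborel. x * exp (- \<beta> * x\<^sup>2 / 2) * interval_kernel x s) = exp (- \<beta> * s\<^sup>2 / 2) / \<beta>"
proof -
  define w where "w s = (\<lambda>x. x * exp (- \<beta> * x\<^sup>2 / 2) * interval_kernel x s)" for s
  have pos: "integrable lborel (w s) \<and> integral\<^sup>L lborel (w s) = exp (- \<beta> * s\<^sup>2 / 2) / \<beta>"
    if "0 < s" for s
  proof -
    have "w s = (\<lambda>x. indicator {s<..} x *\<^sub>R (x * exp (- \<beta> * x\<^sup>2 / 2)))"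
      using that by (auto simp: fun_eq_iff w_def interval_kernel_def indicator_def)
    then show ?thesis
      using odd_gauss_tail_integral[OF assms(1), of s] that
      by (simp add: set_integrable_def set_lebesgue_integral_def)
  qed
  have "integrable lborel (w s) \<and> integral\<^sup>L lborel (w s) = exp (- \<beta> * s\<^sup>2 / 2) / \<beta>"
  proof (cases "0 < s")
    case False
    then have "0 < - s"
      using assms(2) by simp
    moreover have "w s = (\<lambda>x. w (- s) (0 + -1 * x))"
      by (simp add: fun_eq_iff w_def interval_kernel_uminus)
    ultimately show ?thesis
      using pos lborel_integrable_real_affine_iff[of "-1" "w (- s)" 0]
        lborel_integral_real_affine[of "-1" "w (- s)" 0] by simp
  qed (use pos in blast)
  then show "integrable lborel (\<lambda>x. x * exp (- \<beta> * x\<^sup>2 / 2) * interval_kernel x s)"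
    "(LINT x|lborel. x * exp (- \<beta> * x\<^sup>2 / 2) * interval_kernel x s) = exp (- \<beta> * s\<^sup>2 / 2) / \<beta>"
    by (simp_all add: w_def)
qed

lemma interval_integral_eq_kernel:
  fixes h :: "real \<Rightarrow> 'a :: {banach, second_countable_topology}"
  shows "interval_lebesgue_integral lborel (ereal 0) (ereal x) h = (LINT s|lborel. interval_kernel x s *\<^sub>R h s)"
proof (cases "0 \<le> x")
  case True
  then show ?thesis
    by (simp add: interval_lebesgue_integral_def set_lebesgue_integral_def zero_ereal_def)
      (intro Bochner_Integration.integral_cong; auto simp: interval_kernel_def indicator_def)
next
  case False
  then have "interval_lebesgue_integral lborel (ereal 0) (ereal x) h = (LINT s|lborel. - (indicator {x<..<0} s *\<^sub>R h s))"
    by (simp add: interval_lebesgue_integral_def set_lebesgue_integral_def zero_ereal_def)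
  also have "\<dots> = (LINT s|lborel. interval_kernel x s *\<^sub>R h s)"
    using False by (intro Bochner_Integration.integral_cong) (auto simp: interval_kernel_def indicator_def)
  finally show ?thesis .
qed

section \<open>Eigenvectors of the adjoint of t\<close>

lemma integrable_interval_kernel_pair:
  fixes h :: "real \<Rightarrow> complex"
  assumes \<beta>: "0 < \<beta>" and h [measurable]: "h \<in> borel_measurable lborel"
    and h_int: "integrable lborel (\<lambda>s. cnj (h s) * gauss \<beta> s)"
  shows "integrable (lborel \<Otimes>\<^sub>M lborel)
    (\<lambda>(s, x). complex_of_real (x * exp (- \<beta> * x\<^sup>2 / 2) * interval_kernel x s) * cnj (h s))"
proof -
  define H where "H s x = complex_of_real (x * exp (- \<beta> * x\<^sup>2 / 2) * interval_kernel x s) * cnj (h s)"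
    for s x
  have H_meas: "(\<lambda>(s, x). H s x) \<in> borel_measurable (lborel \<Otimes>\<^sub>M lborel)"
    unfolding H_def interval_kernel_def by measurable
  have norm_integral: "(LINT x|lborel. norm (H s x)) = cmod (cnj (h s) * gauss \<beta> s) / \<beta>"
    if "s \<noteq> 0" for s
  proof -
    have norm_H: "norm (H s x) = x * exp (- \<beta> * x\<^sup>2 / 2) * interval_kernel x s * cmod (h s)" for x
      by (auto simp: H_def norm_mult interval_kernel_def mult_nonpos_nonneg)
    have "(LINT x|lborel. norm (H s x))
        = (LINT x|lborel. x * exp (- \<beta> * x\<^sup>2 / 2) * interval_kernel x s) * cmod (h s)"
      unfolding norm_H by (rule integral_mult_left_zero)
    also have "\<dots> = cmod (cnj (h s) * gauss \<beta> s) / \<beta>"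
      using interval_kernel_moment(2)[OF \<beta> that] \<beta> by (simp add: norm_mult gauss_def)
    finally show ?thesis .
  qed
  have "integrable (lborel \<Otimes>\<^sub>M lborel) (\<lambda>(s, x). H s x)"
  proof (rule lborel_pair.Fubini_integrable[OF H_meas])
    have "integrable lborel (\<lambda>s. cmod (cnj (h s) * gauss \<beta> s) / \<beta>)"
      using h_int by simp
    then show "integrable lborel (\<lambda>s. LINT x|lborel. norm (case (s, x) of (s, x) \<Rightarrow> H s x))"
    proof (rule integrable_cong_AE_imp)
      show "(\<lambda>s. LINT x|lborel. norm (case (s, x) of (s, x) \<Rightarrow> H s x)) \<in> borel_measurable lborel"
        using H_meas by measurable
      show "AE s in lborel. cmod (cnj (h s) * gauss \<beta> s) / \<beta>
          = (LINT x|lborel. norm (case (s, x) of (s, x) \<Rightarrow> H s x))"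
        using AE_lborel_singleton[of 0] norm_integral by (auto elim: AE_mp)
    qed
    show "AE s in lborel. integrable lborel (\<lambda>x. case (s, x) of (s, x) \<Rightarrow> H s x)"
      using AE_lborel_singleton[of 0]
    proof eventually_elim
      case (elim s)
      show ?case
        unfolding prod.case H_def using interval_kernel_moment(1)[OF \<beta> elim]
        by (intro integrable_mult_left integrable_of_real)
    qed
  qed
  then show ?thesis
    by (simp add: H_def)
qed

lemma integral_cnj_primitive_mult_odd_gauss:
  fixes h :: "real \<Rightarrow> complex"
  assumes \<beta>: "0 < \<beta>" and h [measurable]: "h \<in> borel_measurable lborel"
    and h_int: "integrable lborel (\<lambda>s. cnj (h s) * gauss \<beta> s)"
  defines "J \<equiv> \<lambda>x. cnj (interval_lebesgue_integral lborel (ereal 0) (ereal x) h) * odd_gauss \<beta> x"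
  shows "integrable lborel J"
    and "integral\<^sup>L lborel J = (LINT s|lborel. cnj (h s) * gauss \<beta> s) / \<beta>"
proof -
  define H where "H s x = complex_of_real (x * exp (- \<beta> * x\<^sup>2 / 2) * interval_kernel x s) * cnj (h s)"
    for s x
  have H_int: "integrable (lborel \<Otimes>\<^sub>M lborel) (\<lambda>(s, x). H s x)"
    unfolding H_def using integrable_interval_kernel_pair[OF \<beta> h h_int] .
  then have [measurable]: "(\<lambda>(s, x). H s x) \<in> borel_measurable (lborel \<Otimes>\<^sub>M lborel)"
    by (rule borel_measurable_integrable)
  have J_eq: "J x = (LINT s|lborel. H s x)" for x
    unfolding J_def H_def interval_integral_eq_kernel
    by (simp add: integral_mult_left_zero[symmetric] odd_gauss_def scaleR_conv_of_real mult_ac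
        flip: Bochner_Integration.integral_cnj)
  show "integrable lborel J"
    unfolding J_eq using lborel_pair.integrable_snd[OF H_int] by simp
  have inner: "(LINT x|lborel. H s x) = cnj (h s) * gauss \<beta> s / \<beta>" if "s \<noteq> 0" for s
  proof -
    have "(LINT x|lborel. H s x)
        = complex_of_real (LINT x|lborel. x * exp (- \<beta> * x\<^sup>2 / 2) * interval_kernel x s) * cnj (h s)"
      unfolding H_def by (simp only: integral_mult_left_zero integral_complex_of_real)
    then show ?thesis
      using interval_kernel_moment(2)[OF \<beta> that] by (simp add: gauss_def mult.commute)
  qed
  have "integral\<^sup>L lborel J = (LINT s|lborel. LINT x|lborel. H s x)"
    unfolding J_eq by (rule lborel_pair.Fubini_integral[OF H_int])
  also have "\<dots> = (LINT s|lborel. cnj (h s) * gauss \<beta> s / \<beta>)"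
  proof (rule integral_cong_AE)
    show "(\<lambda>s. LINT x|lborel. H s x) \<in> borel_measurable lborel"
      by measurable
  qed (use AE_lborel_singleton[of 0] inner in \<open>auto elim: AE_mp\<close>)
  finally show "integral\<^sup>L lborel J = (LINT s|lborel. cnj (h s) * gauss \<beta> s) / \<beta>"
    by simp
qed

lemma l2inner_q_op_odd_gauss:
  assumes "(k, p) \<in> q_op"
  shows "l2inner k (odd_gauss \<beta>) = l2inner p (gauss \<beta>)"
  unfolding l2inner_def
proof (rule integral_cong_AE)
  have [measurable]: "k \<in> borel_measurable lborel" "p \<in> borel_measurable lborel"
    using assms unfolding q_op_def L2_def by auto
  show "(\<lambda>x. cnj (k x) * odd_gauss \<beta> x) \<in> borel_measurable lborel"
    by measurable
  show "(\<lambda>x. cnj (p x) * gauss \<beta> x) \<in> borel_measurable lborel"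
    by measurable
  have "AE x in lborel. p x = complex_of_real x * k x"
    using assms by (simp add: q_op_def)
  then show "AE x in lborel. cnj (k x) * odd_gauss \<beta> x = cnj (p x) * gauss \<beta> x"
    by eventually_elim (simp add: odd_gauss_def gauss_def)
qed

lemma l2inner_p_op_odd_gauss:
  assumes \<beta>: "0 < \<beta>" and fp: "(f, p) \<in> p_op"
  shows "l2inner f (\<lambda>x. (\<i> * complex_of_real \<beta>) * odd_gauss \<beta> x) = l2inner p (gauss \<beta>)"
proof -
  have pL: "p \<in> L2"
    using fp by (simp add: p_op_def)
  have [measurable]: "f \<in> borel_measurable lborel" "p \<in> borel_measurable lborel"
    using fp by (auto simp: p_op_def L2_def)
  obtain c where f_eq:
    "AE x in lborel. f x = c + interval_lebesgue_integral lborel (ereal 0) (ereal x) (\<lambda>s. \<i> * p s)"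
    using fp by (auto simp: p_op_def)
  define J where
    "J = (\<lambda>x. cnj (interval_lebesgue_integral lborel (ereal 0) (ereal x) (\<lambda>s. \<i> * p s)) * odd_gauss \<beta> x)"
  have ip_eq: "cnj (\<i> * p s) * gauss \<beta> s = - \<i> * (cnj (p s) * gauss \<beta> s)" for s
    by simp
  have "integrable lborel (\<lambda>s. cnj (\<i> * p s) * gauss \<beta> s)"
    unfolding ip_eq using integrable_cnj_mult_L2[OF pL gauss_L2[OF \<beta>]] by (rule integrable_mult_right)
  note J = integral_cnj_primitive_mult_odd_gauss[OF \<beta> _ this, folded J_def]
  have "l2inner p (gauss \<beta>) = \<i> * \<beta> * (cnj c * (LINT x|lborel. odd_gauss \<beta> x) + integral\<^sup>L lborel J)"
    using \<beta> J(2) unfolding ip_eq integral_mult_right_zero by (simp add: integral_odd_gauss l2inner_def)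
  also have "\<dots> = (LINT x|lborel. \<i> * \<beta> * (cnj c * odd_gauss \<beta> x + J x))"
    using integrable_odd_gauss[OF \<beta>] J(1) by simp
  also have "\<dots> = l2inner f (\<lambda>x. (\<i> * complex_of_real \<beta>) * odd_gauss \<beta> x)"
    unfolding l2inner_def
  proof (rule integral_cong_AE)
    show "(\<lambda>x. \<i> * \<beta> * (cnj c * odd_gauss \<beta> x + J x)) \<in> borel_measurable lborel"
      using borel_measurable_integrable[OF J(1)] by measurable
    show "AE x in lborel. \<i> * \<beta> * (cnj c * odd_gauss \<beta> x + J x) = cnj (f x) * (\<i> * \<beta> * odd_gauss \<beta> x)"
      using f_eq by eventually_elim (simp add: J_def algebra_simps)
  qed simp
  finally show ?thesis
    by simp
qed

lemma odd_gauss_eigenvector_adjoint_t: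
  assumes "0 < \<beta>"
  shows "(odd_gauss \<beta>, \<lambda>x. (\<i> * complex_of_real \<beta>) * odd_gauss \<beta> x) \<in> adjoint_op t_op"
proof -
  have "l2inner k (odd_gauss \<beta>) = l2inner f (\<lambda>x. (\<i> * complex_of_real \<beta>) * odd_gauss \<beta> x)"
    if "(f, k) \<in> t_op" for f k
    using that l2inner_q_op_odd_gauss l2inner_p_op_odd_gauss[OF assms] by (auto simp: t_op_def)
  then show ?thesis
    using odd_gauss_L2[OF assms] L2_cmult[OF odd_gauss_L2[OF assms]] by (auto simp: adjoint_op_def)
qed

section \<open>The operator S*\<close>

lemma artanh_odd_power_sums:
  fixes a :: real
  assumes "\<bar>a\<bar> < 1"
  shows "(\<lambda>n. a ^ (2 * n + 1) / real (2 * n + 1)) sums artanh a"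
proof -
  have "(\<lambda>n. (- ((-a) ^ n) / of_nat n - - (a ^ n) / of_nat n) / 2) sums ((ln (1 + a) - ln (1 - a)) / 2)"
    using sums_divide[OF sums_diff[OF ln_series'[of a] ln_series'[of "-a"]]] assms by simp
  moreover have "(ln (1 + a) - ln (1 - a)) / 2 = artanh a"
    using assms by (simp add: artanh_def ln_div abs_less_iff)
  moreover have "(\<lambda>n. (- ((-a) ^ n) / of_nat n - - (a ^ n) / of_nat n) / 2) =
      (\<lambda>n. if even n then 0 else a ^ n / real n)"
    by (auto simp: fun_eq_iff power_minus')
  ultimately have "(\<lambda>n. if even n then 0 else a ^ n / real n) sums artanh a"
    by simp
  then have "(\<lambda>n. (\<lambda>n. if even n then 0 else a ^ n / real n) (2 * n + 1)) sums artanh a"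
    by (subst sums_mono_reindex[of "\<lambda>n. 2 * n + 1"]) (auto simp: strict_mono_def elim!: oddE)
  then show ?thesis
    by simp
qed

lemma imaginary_odd_power_coefficient:
  fixes r a :: real
  assumes "r \<noteq> 0"
  shows "complex_of_real ((-1) ^ n / real (2 * n + 1) * r ^ (2 * n + 1)) * (\<i> * complex_of_real (a / r)) ^ (2 * n + 1)
    = \<i> * complex_of_real (a ^ (2 * n + 1) / real (2 * n + 1))"
proof -
  define X where "X = (-1) ^ n / real (2 * n + 1) * r ^ (2 * n + 1)"
  define Y where "Y = (-1) ^ n * (a / r) ^ (2 * n + 1)"
  have "\<i> ^ (2 * n + 1) = \<i> * complex_of_real ((-1) ^ n)"
    by (simp add: power_mult)
  then have i_power: "(\<i> * complex_of_real (a / r)) ^ (2 * n + 1) = \<i> * complex_of_real Y"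
    unfolding power_mult_distrib Y_def by simp
  have "(-1::real) ^ n * (-1) ^ n = 1"
    by (simp flip: power_add)
  moreover have "r ^ (2 * n + 1) * (a / r) ^ (2 * n + 1) = a ^ (2 * n + 1)"
    using assms by (simp add: power_divide)
  moreover have "X * Y = ((-1) ^ n * (-1) ^ n) * (r ^ (2 * n + 1) * (a / r) ^ (2 * n + 1)) / real (2 * n + 1)"
    unfolding X_def Y_def by (simp only: divide_inverse mult_ac)
  ultimately have "X * Y = a ^ (2 * n + 1) / real (2 * n + 1)"
    by simp
  moreover have "complex_of_real X * (\<i> * complex_of_real Y) = \<i> * complex_of_real (X * Y)"
    by simp
  ultimately show ?thesis
    unfolding X_def[symmetric] i_power by simp
qed

lemma S_eps_coefficient_series:
  assumes "0 < \<epsilon>" "\<bar>a\<bar> < 1"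
  shows "(\<lambda>N. \<Sum>n\<le>N. complex_of_real ((-1) ^ n / real (2 * n + 1) * sqrt \<epsilon> ^ (2 * n + 1))
            * (\<i> * complex_of_real (a / sqrt \<epsilon>)) ^ (2 * n + 1))
         \<longlonglongrightarrow> \<i> * complex_of_real (artanh a)"
proof -
  have "sqrt \<epsilon> \<noteq> 0"
    using assms(1) by simp
  have "(\<lambda>N. \<Sum>n\<le>N. a ^ (2 * n + 1) / real (2 * n + 1)) \<longlonglongrightarrow> artanh a"
    using artanh_odd_power_sums[OF assms(2)] unfolding sums_def_le .
  then have "(\<lambda>N. \<i> * complex_of_real (\<Sum>n\<le>N. a ^ (2 * n + 1) / real (2 * n + 1)))
      \<longlonglongrightarrow> \<i> * complex_of_real (artanh a)"
    by (intro tendsto_intros)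
  then show ?thesis
    unfolding imaginary_odd_power_coefficient[OF \<open>sqrt \<epsilon> \<noteq> 0\<close>] by (simp add: sum_distrib_left)
qed

lemma S_eps_eigenvector_sum:
  assumes I: "finite I"
    and eigen: "\<And>i. i \<in> I \<Longrightarrow> (g i, \<lambda>x. lam i * g i x) \<in> adjoint_op t_op"
    and odd: "odd_fun (\<lambda>x. \<Sum>i\<in>I. c i * g i x)"
    and series: "\<And>i. i \<in> I \<Longrightarrow>
      (\<lambda>N. \<Sum>n\<le>N. complex_of_real ((-1) ^ n / real (2 * n + 1) * sqrt \<epsilon> ^ (2 * n + 1)) * lam i ^ (2 * n + 1))
        \<longlonglongrightarrow> - complex_of_real (sqrt \<epsilon>) * mu i"
  shows "(\<lambda>x. \<Sum>i\<in>I. c i * g i x, \<lambda>x. \<Sum>i\<in>I. (c i * mu i) * g i x) \<in> S_eps \<epsilon>"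
proof -
  define r where "r n = complex_of_real ((-1) ^ n / real (2 * n + 1) * sqrt \<epsilon> ^ (2 * n + 1))" for n
  define v where "v n = (\<lambda>x. \<Sum>i\<in>I. c i * lam i ^ (2 * n + 1) * g i x)" for n
  define D where "D i N = c i * ((\<Sum>n\<le>N. r n * lam i ^ (2 * n + 1)) + complex_of_real (sqrt \<epsilon>) * mu i)"
    for i N
  have g_L2: "g i \<in> L2" if "i \<in> I" for i
    using eigen[OF that] by (simp add: adjoint_op_def)
  have v: "(\<lambda>x. \<Sum>i\<in>I. c i * g i x, v n) \<in> adjoint_op t_op ^^ (2 * n + 1)" for n
    unfolding v_def using adjoint_op_relpow_eigen_sum[OF t_op_subset_L2 I eigen] .
  have partial_sums: "(\<Sum>n\<le>N. r n * v n x) + complex_of_real (sqrt \<epsilon>) * (\<Sum>i\<in>I. (c i * mu i) * g i x)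
      = (\<Sum>i\<in>I. D i N * g i x)" for N x
  proof -
    have "(\<Sum>n\<le>N. r n * v n x) = (\<Sum>n\<le>N. \<Sum>i\<in>I. c i * (r n * lam i ^ (2 * n + 1)) * g i x)"
      unfolding v_def by (simp add: sum_distrib_left mult_ac)
    also have "\<dots> = (\<Sum>i\<in>I. \<Sum>n\<le>N. c i * (r n * lam i ^ (2 * n + 1)) * g i x)"
      by (rule sum.swap)
    also have "\<dots> = (\<Sum>i\<in>I. c i * (\<Sum>n\<le>N. r n * lam i ^ (2 * n + 1)) * g i x)"
      by (simp add: sum_distrib_left sum_distrib_right)
    finally show ?thesis
      by (simp add: D_def sum_distrib_left algebra_simps flip: sum.distrib)
  qed
  have "D i \<longlonglongrightarrow> c i * (- complex_of_real (sqrt \<epsilon>) * mu i + complex_of_real (sqrt \<epsilon>) * mu i)"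
    if "i \<in> I" for i
    unfolding D_def r_def using series[OF that] by (intro tendsto_intros)
  then have "(\<lambda>N. l2norm (\<lambda>x. \<Sum>i\<in>I. D i N * g i x)) \<longlonglongrightarrow> 0"
    using l2norm_sum_tendsto_0[OF I g_L2] by simp
  then have "(\<lambda>N. l2norm (\<lambda>x. (\<Sum>n\<le>N. r n * v n x) + complex_of_real (sqrt \<epsilon>) * (\<Sum>i\<in>I. (c i * mu i) * g i x)))
      \<longlonglongrightarrow> 0"
    unfolding partial_sums .
  moreover have "(\<lambda>x. \<Sum>i\<in>I. c i * g i x) \<in> L2" "(\<lambda>x. \<Sum>i\<in>I. (c i * mu i) * g i x) \<in> L2"
    using L2_sum[OF I g_L2] by auto
  ultimately show ?thesis
    unfolding S_eps_def using odd v unfolding r_def by blast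
qed

lemma S_eps_odd_gauss_sum:
  assumes \<epsilon>: "0 < \<epsilon>" and I: "finite I" and a: "\<And>i. i \<in> I \<Longrightarrow> 0 < a i \<and> a i < 1"
  shows "(\<lambda>x. \<Sum>i\<in>I. c i * odd_gauss (a i / sqrt \<epsilon>) x,
          \<lambda>x. \<Sum>i\<in>I. (c i * (- \<i> * complex_of_real (artanh (a i) / sqrt \<epsilon>))) * odd_gauss (a i / sqrt \<epsilon>) x)
         \<in> S_eps \<epsilon>"
proof (rule S_eps_eigenvector_sum[OF I])
  show "(odd_gauss (a i / sqrt \<epsilon>), \<lambda>x. (\<i> * complex_of_real (a i / sqrt \<epsilon>)) * odd_gauss (a i / sqrt \<epsilon>) x)
      \<in> adjoint_op t_op" if "i \<in> I" for i
    using a[OF that] \<epsilon> by (intro odd_gauss_eigenvector_adjoint_t) simp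
  show "odd_fun (\<lambda>x. \<Sum>i\<in>I. c i * odd_gauss (a i / sqrt \<epsilon>) x)"
    unfolding odd_fun_def by (intro AE_I2) (simp add: odd_gauss_minus sum_negf)
  have "- complex_of_real (sqrt \<epsilon>) * (- \<i> * complex_of_real (artanh (a i) / sqrt \<epsilon>))
      = \<i> * complex_of_real (artanh (a i))" for i
    using \<epsilon> by (simp flip: of_real_mult)
  then show "(\<lambda>N. \<Sum>n\<le>N. complex_of_real ((-1) ^ n / real (2 * n + 1) * sqrt \<epsilon> ^ (2 * n + 1))
        * (\<i> * complex_of_real (a i / sqrt \<epsilon>)) ^ (2 * n + 1))
      \<longlonglongrightarrow> - complex_of_real (sqrt \<epsilon>) * (- \<i> * complex_of_real (artanh (a i) / sqrt \<epsilon>))"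
    if "i \<in> I" for i
    using S_eps_coefficient_series[OF \<epsilon>] a[OF that] by simp
qed

lemma unbounded_op_if_eigenvalue_ray:
  assumes "\<And>s. 0 < s \<Longrightarrow> eigenvalue_op T (u * complex_of_real s)" and "cmod u = 1"
  shows "unbounded_op T"
  unfolding unbounded_op_def
proof
  assume "\<exists>C. \<forall>(f, g) \<in> T. l2norm g \<le> C * l2norm f"
  then obtain C where C: "\<forall>(f, g) \<in> T. l2norm g \<le> C * l2norm f"
    by blast
  define s where "s = \<bar>C\<bar> + 1"
  then have "0 < s"
    by simp
  then obtain f where f: "l2norm f \<noteq> 0" "(f, \<lambda>x. (u * complex_of_real s) * f x) \<in> T"
    using assms(1) unfolding eigenvalue_op_def by blast
  then have "s * l2norm f \<le> C * l2norm f"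
    using C assms(2) \<open>0 < s\<close> by (auto simp: l2norm_cmult norm_mult)
  moreover have "0 < l2norm f"
    using f(1) l2norm_nonneg[of f] by linarith
  ultimately show False
    by (simp add: s_def mult_le_cancel_right)
qed

lemma Lfrak1_subset_Domain_S_eps:
  assumes "0 < \<epsilon>"
  shows "Lfrak1 \<epsilon> \<subseteq> Domain (S_eps \<epsilon>)"
proof
  fix f assume "f \<in> Lfrak1 \<epsilon>"
  then obtain k :: nat and c :: "nat \<Rightarrow> complex" and a :: "nat \<Rightarrow> real" where a: "\<forall>i<k. 0 < a i \<and> a i < 1"
    and f: "f = (\<lambda>x. \<Sum>i<k. c i * complex_of_real (x * exp (- a i * x\<^sup>2 / (2 * sqrt \<epsilon>))))"
    unfolding Lfrak1_def by blast
  have "- (a i / sqrt \<epsilon>) * x\<^sup>2 / 2 = - a i * x\<^sup>2 / (2 * sqrt \<epsilon>)" for i x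
    by simp
  then have "f = (\<lambda>x. \<Sum>i<k. c i * odd_gauss (a i / sqrt \<epsilon>) x)"
    unfolding f odd_gauss_def by presburger
  then show "f \<in> Domain (S_eps \<epsilon>)"
    using S_eps_odd_gauss_sum[OF assms, of "{..<k}" a c] a by blast
qed

lemma eigenvalue_op_adjoint_t:
  assumes "0 < s"
  shows "eigenvalue_op (adjoint_op t_op) (\<i> * complex_of_real s)"
  unfolding eigenvalue_op_def
  using odd_gauss_L2 l2norm_odd_gauss_pos odd_gauss_eigenvector_adjoint_t assms by fastforce

lemma eigenvalue_op_S_eps:
  assumes "0 < \<epsilon>" "0 < s"
  shows "eigenvalue_op (S_eps \<epsilon>) (- \<i> * complex_of_real s)"
proof -
  define a where "a = tanh (sqrt \<epsilon> * s)"
  have a: "0 < a" "a < 1" "artanh a / sqrt \<epsilon> = s"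
    unfolding a_def using assms by (auto simp: tanh_real_lt_1 artanh_tanh_real)
  then have "(odd_gauss (a / sqrt \<epsilon>), \<lambda>x. (- \<i> * complex_of_real s) * odd_gauss (a / sqrt \<epsilon>) x) \<in> S_eps \<epsilon>"
    using S_eps_odd_gauss_sum[OF assms(1), of "{0}" "\<lambda>_. a" "\<lambda>_. 1"] by simp
  moreover have "0 < a / sqrt \<epsilon>"
    using a assms by simp
  ultimately show ?thesis
    unfolding eigenvalue_op_def using odd_gauss_L2 l2norm_odd_gauss_pos by fastforce
qed

theorem theorem3p4:
  fixes \<epsilon> :: real
  assumes "0 < \<epsilon>" and "\<epsilon> \<le> 1"
  shows "Lfrak1 \<epsilon> \<subseteq> Domain (S_eps \<epsilon>)
    \<and> (\<forall>s>0. eigenvalue_op (adjoint_op t_op) (\<i> * complex_of_real s))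
    \<and> (\<forall>s>0. eigenvalue_op (S_eps \<epsilon>) (- \<i> * complex_of_real s))
    \<and> unbounded_op (adjoint_op t_op) \<and> unbounded_op (S_eps \<epsilon>)"
proof -
  have "\<And>s. 0 < s \<Longrightarrow> eigenvalue_op (adjoint_op t_op) (\<i> * complex_of_real s)"
    "\<And>s. 0 < s \<Longrightarrow> eigenvalue_op (S_eps \<epsilon>) (- \<i> * complex_of_real s)"
    using eigenvalue_op_adjoint_t eigenvalue_op_S_eps[OF assms(1)] by auto
  then show ?thesis
    using Lfrak1_subset_Domain_S_eps[OF assms(1)]
      unbounded_op_if_eigenvalue_ray[of "adjoint_op t_op" \<i>]
      unbounded_op_if_eigenvalue_ray[of "S_eps \<epsilon>" "- \<i>"] by auto
qed

end
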